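(* Let $d\geq 2$ and $N\geq1$ be integers and let $A\in\mathbb{Z}_{\geq0}^{N\times d}$ be an $(N,d)$-complete consecutive integers matrix. Then $$a_d(\lfloor\log_d N\rfloor)\leq\beta(A)\leq\gamma(A)\leq a_d(\lceil\log_d N\rceil),$$ where $a_d(k)=d+\sum_{i=0}^{d-1}\sum_{j=1}^{k} i\cdot d^{j-1}$. In particular, underestimating $\beta(A)$ by $a_d(\lfloor\log_d N\rfloor)$ and overestimating $\gamma(A)$ by $a_d(\lceil\log_d N\rceil)$ incurs an additive error of at most $\sum_{i=0}^{d-1} i\cdot d^{\lceil\log_d N\rceil-1}$.
   Context: For $A\in\mathbb{R}^{m\times d}$ and $\Pi=(\pi_1,\dots,\pi_d)\in\mathfrak{S}(m)^d$ (where $\mathfrak{S}(m)$ is the symmetric group on $\{1,\dots,m\}$), $A^\Pi$ denotes the matrix with $A^\Pi_{i,j}=A_{\pi_j^{-1}(i),j}$. Define $\gamma(A)=\min_{\Pi}\max_{i}\sum_{j=1}^d A^\Pi_{i,j}$ and $\beta(A)=\max_{\Pi}\min_{i}\sum_{j=1}^d A^\Pi_{i,j}$. For $d,N\in\mathbb{Z}_{\geq0}$ let $a=(1,\dots,N)^\top$; any matrix $A^\Pi$ obtained from $(a,\dots,a)\in\mathbb{Z}^{N\times d}$ by permutations $\Pi\in\mathfrak{S}(N)^d$ of the columns' entries is called an $(N,d)$-complete consecutive integers matrix. *)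

theory Defs
  imports "HOL-Combinatorics.Permutations" "HOL-Library.FuncSet" Complex_Main
begin

text \<open>Matrices in Z^(N x d) are functions nat => nat => int, row index i < N,
  column index j < d (0-based).\<close>

definition perm_tuples :: "nat \<Rightarrow> nat \<Rightarrow> (nat \<Rightarrow> nat \<Rightarrow> nat) set" where
  "perm_tuples N d = PiE {..<d} (\<lambda>_. {p. p permutes {..<N}})"

definition perm_matrix :: "(nat \<Rightarrow> nat \<Rightarrow> int) \<Rightarrow> (nat \<Rightarrow> nat \<Rightarrow> nat) \<Rightarrow> nat \<Rightarrow> nat \<Rightarrow> int" where
  "perm_matrix A P = (\<lambda>i j. A (inv (P j) i) j)"

definition row_sum :: "nat \<Rightarrow> (nat \<Rightarrow> nat \<Rightarrow> int) \<Rightarrow> nat \<Rightarrow> int" where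
  "row_sum d A i = (\<Sum>j<d. A i j)"

definition gamma :: "nat \<Rightarrow> nat \<Rightarrow> (nat \<Rightarrow> nat \<Rightarrow> int) \<Rightarrow> int" where
  "gamma N d A = Min ((\<lambda>P. Max ((\<lambda>i. row_sum d (perm_matrix A P) i) ` {..<N})) ` perm_tuples N d)"

definition beta :: "nat \<Rightarrow> nat \<Rightarrow> (nat \<Rightarrow> nat \<Rightarrow> int) \<Rightarrow> int" where
  "beta N d A = Max ((\<lambda>P. Min ((\<lambda>i. row_sum d (perm_matrix A P) i) ` {..<N})) ` perm_tuples N d)"

text \<open>(N,d)-complete consecutive integers matrix: A = (a,...,a)^Pi with a = (1,...,N)^T,
  i.e. the 0-based row r of a holds r+1.\<close>
definition complete_consec :: "nat \<Rightarrow> nat \<Rightarrow> (nat \<Rightarrow> nat \<Rightarrow> int) \<Rightarrow> bool" where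
  "complete_consec N d A \<longleftrightarrow>
     (\<exists>P\<in>perm_tuples N d. \<forall>i<N. \<forall>j<d. A i j = perm_matrix (\<lambda>r _. int r + 1) P i j)"

definition a_d :: "nat \<Rightarrow> nat \<Rightarrow> int" where
  "a_d d k = int d + (\<Sum>i<d. \<Sum>j=1..k. int i * int d ^ (j - 1))"

end

theory Submission
  imports Defs
begin

text \<open>Every arrangement of a complete consecutive matrix has total sum d N (N + 1) / 2, so its
  row sums average d (N + 1) / 2, giving \<open>\<beta> \<le> d (N + 1) / 2 \<le> \<gamma>\<close>. Conversely the columns can be
  arranged so that every row sum lies within 1/2 of this average: pair each column with a reversed
  copy (the two entries of a row then sum to N + 1) and, for odd d, absorb three columns by a
  rotation by \<open>\<lfloor>N/2\<rfloor>\<close> and a suitable third permutation. Hence also \<open>d (N + 1) \<le> 2 \<beta> + 1\<close> and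
  \<open>2 \<gamma> \<le> d (N + 1) + 1\<close>, and by integrality, since \<open>2 a_d(k) = d (d^k + 1)\<close> and
  \<open>d^\<lfloor>log_d N\<rfloor> \<le> N \<le> d^\<lceil>log_d N\<rceil>\<close>, the bounds follow, and the error term is \<open>a_d(k+1) - a_d(k)\<close>.\<close>

lemma restrict_id_permutes:
  assumes "finite S" "inj_on f S" "f ` S \<subseteq> S"
  shows "restrict_id f S permutes S"
  using assms by (intro permutes_restrict_id) (simp add: bij_betw_def endo_inj_surj)

definition reflect_perm :: "nat \<Rightarrow> nat \<Rightarrow> nat" where
  "reflect_perm N = restrict_id (\<lambda>r. N - 1 - r) {..<N}"

lemma reflect_perm_permutes: "reflect_perm N permutes {..<N}"
  unfolding reflect_perm_def by (rule restrict_id_permutes) (auto simp: inj_on_def)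

lemma add_reflect_perm: "r < N \<Longrightarrow> r + reflect_perm N r = N - 1"
  by (simp add: reflect_perm_def)

lemma three_permutations_near_constant_sum:
  obtains p q where "p permutes {..<N}" "q permutes {..<N}"
    and "\<And>r. r < N \<Longrightarrow> \<bar>2 * int (r + p r + q r) - 3 * (int N - 1)\<bar> \<le> 1"
proof
  define m where "m = N div 2"
  \<comment> \<open>f is the rotation \<open>r \<mapsto> (r + m) mod N\<close>; g decreases in steps of 2 on the two arcs of f,
     so that \<open>r + f r + g r\<close> takes at most the two values nearest to \<open>3 (N - 1) / 2\<close>.\<close>
  define f where "f r = (if r < N - m then m + r else r - (N - m))" for r
  define g where "g r = (if odd N then (if r \<le> m then 2*m - 2*r else 4*m + 1 - 2*r)
                         else (if r < m then 2*m - 1 - 2*r else 4*m - 2 - 2*r))" for r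
  have "inj_on f {..<N}" "inj_on g {..<N}"
    unfolding f_def g_def m_def inj_on_def
    by (auto split: if_splits elim!: oddE evenE; presburger)+
  moreover have "f ` {..<N} \<subseteq> {..<N}" "g ` {..<N} \<subseteq> {..<N}"
    unfolding f_def g_def m_def by (auto elim!: oddE evenE)
  ultimately show "restrict_id f {..<N} permutes {..<N}" "restrict_id g {..<N} permutes {..<N}"
    by (simp_all add: restrict_id_permutes)
  show "\<bar>2 * int (r + restrict_id f {..<N} r + restrict_id g {..<N} r) - 3 * (int N - 1)\<bar> \<le> 1"
    if "r < N" for r
    using that unfolding f_def g_def m_def by (cases "odd N") (auto elim!: oddE evenE)
qed

lemma permutations_near_constant_sum:
  assumes "d \<ge> 2"
  shows "\<exists>c. (\<forall>j<d. c j permutes {..<N})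
           \<and> (\<forall>r<N. \<bar>2 * (\<Sum>j<d. int (c j r)) - int d * (int N - 1)\<bar> \<le> 1)"
  using assms
proof (induction d rule: less_induct)
  case (less d)
  consider "d = 2" | "d = 3" | "d \<ge> 4" using less.prems by linarith
  then show ?case
  proof cases
    case 1
    define c where "c j = (if j = 0 then id else reflect_perm N)" for j :: nat
    have "\<forall>j<d. c j permutes {..<N}"
      by (simp add: c_def permutes_id reflect_perm_permutes)
    moreover have "(\<Sum>j<d. int (c j r)) = int N - 1" if "r < N" for r
      using add_reflect_perm[OF that] that 1 by (simp add: c_def numeral_2_eq_2 of_nat_diff)
    ultimately show ?thesis using 1 by auto
  next
    case 2
    obtain p q where "p permutes {..<N}" "q permutes {..<N}"
      and pq: "\<And>r. r < N \<Longrightarrow> \<bar>2 * int (r + p r + q r) - 3 * (int N - 1)\<bar> \<le> 1"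
      using three_permutations_near_constant_sum[of N] by blast
    define c where "c j = (if j = 0 then id else if j = 1 then p else q)" for j :: nat
    have "\<forall>j<d. c j permutes {..<N}"
      using \<open>p permutes _\<close> \<open>q permutes _\<close> by (simp add: c_def permutes_id)
    moreover have "(\<Sum>j<d. int (c j r)) = int (r + p r + q r)" for r
      using 2 by (simp add: c_def numeral_3_eq_3)
    ultimately show ?thesis using 2 pq by auto
  next
    case 3
    define e where "e = d - 2"
    have d: "d = Suc (Suc e)" "e < d" "2 \<le> e" using 3 by (auto simp: e_def)
    then obtain c where c: "\<forall>j<e. c j permutes {..<N}"
      and sums: "\<forall>r<N. \<bar>2 * (\<Sum>j<e. int (c j r)) - int e * (int N - 1)\<bar> \<le> 1"
      using less.IH by blast
    define c' where "c' j = (if j = e then id else if j = Suc e then reflect_perm N else c j)" for j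
    have "\<forall>j<d. c' j permutes {..<N}"
      using c by (auto simp: c'_def d(1) less_Suc_eq permutes_id reflect_perm_permutes)
    moreover have "\<bar>2 * (\<Sum>j<d. int (c' j r)) - int d * (int N - 1)\<bar> \<le> 1" if "r < N" for r
    proof -
      have "(\<Sum>j<d. int (c' j r)) = (\<Sum>j<e. int (c' j r)) + int r + int (reflect_perm N r)"
        by (simp add: d c'_def)
      also have "(\<Sum>j<e. int (c' j r)) = (\<Sum>j<e. int (c j r))"
        by (simp add: c'_def)
      finally have "(\<Sum>j<d. int (c' j r)) = (\<Sum>j<e. int (c j r)) + (int N - 1)"
        using add_reflect_perm[OF that] that by linarith
      moreover have "int d * (int N - 1) = int e * (int N - 1) + 2 * (int N - 1)"
        by (simp add: d(1) algebra_simps)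
      ultimately show ?thesis using sums that by auto
    qed
    ultimately show ?thesis by blast
  qed
qed

lemma perm_tuples_finite: "finite (perm_tuples N d)"
  unfolding perm_tuples_def by (intro finite_PiE finite_permutations) auto

lemma perm_tuples_nonempty: "perm_tuples N d \<noteq> {}"
  unfolding perm_tuples_def by (auto simp: PiE_eq_empty_iff intro: permutes_id)

lemma perm_tuples_permutes: "P \<in> perm_tuples N d \<Longrightarrow> j < d \<Longrightarrow> P j permutes {..<N}"
  by (auto simp: perm_tuples_def)

lemma sum_inv_permutes:
  assumes "p permutes {..<N}"
  shows "(\<Sum>i<N. f (inv p i)) = (\<Sum>i<N. f i)"
  using sum.reindex_bij_betw[OF permutes_imp_bij[OF permutes_inv[OF assms]]] by simp

lemma sum_row_sum_perm_matrix:
  assumes "P \<in> perm_tuples N d"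
  shows "(\<Sum>i<N. row_sum d (perm_matrix A P) i) = (\<Sum>i<N. row_sum d A i)"
proof -
  have "(\<Sum>i<N. row_sum d (perm_matrix A P) i) = (\<Sum>j<d. \<Sum>i<N. A (inv (P j) i) j)"
    unfolding row_sum_def perm_matrix_def by (rule sum.swap)
  also have "\<dots> = (\<Sum>j<d. \<Sum>i<N. A i j)"
    using assms by (intro sum.cong refl sum_inv_permutes perm_tuples_permutes) auto
  also have "\<dots> = (\<Sum>i<N. row_sum d A i)"
    unfolding row_sum_def by (rule sum.swap)
  finally show ?thesis .
qed

lemma sum_row_sum_complete_consec:
  assumes "complete_consec N d A"
  shows "2 * (\<Sum>i<N. row_sum d A i) = int d * (int N * (int N + 1))"
proof -
  obtain Q where Q: "Q \<in> perm_tuples N d"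
    and A: "\<forall>i<N. \<forall>j<d. A i j = perm_matrix (\<lambda>r _. int r + 1) Q i j"
    using assms unfolding complete_consec_def by blast
  have "(\<Sum>i<N. row_sum d A i) = (\<Sum>i<N. row_sum d (perm_matrix (\<lambda>r _. int r + 1) Q) i)"
    using A by (simp add: row_sum_def)
  also have "\<dots> = int d * (\<Sum>i<N. int i + 1)"
    using sum_row_sum_perm_matrix[OF Q] by (simp add: row_sum_def sum_distrib_left)
  finally have "(\<Sum>i<N. row_sum d A i) = int d * (\<Sum>i<N. int i + 1)" .
  moreover have "2 * (\<Sum>i<N. int i + 1) = int N * (int N + 1)"
    by (induction N) (auto simp: algebra_simps)
  ultimately show ?thesis by (simp add: algebra_simps)
qed

lemma complete_consec_rearrange:
  assumes "complete_consec N d A" and c: "\<forall>j<d. c j permutes {..<N}"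
  obtains P where "P \<in> perm_tuples N d"
    and "\<And>i j. i < N \<Longrightarrow> j < d \<Longrightarrow> perm_matrix A P i j = int (c j i) + 1"
proof -
  obtain Q where Q: "Q \<in> perm_tuples N d"
    and A: "\<forall>i<N. \<forall>j<d. A i j = perm_matrix (\<lambda>r _. int r + 1) Q i j"
    using assms(1) unfolding complete_consec_def by blast
  have Qc: "Q j \<circ> c j permutes {..<N}" if "j < d" for j
    using c that by (intro permutes_compose perm_tuples_permutes[OF Q]) auto
  define P where "P = restrict (\<lambda>j. inv (Q j \<circ> c j)) {..<d}"
  have "P \<in> perm_tuples N d"
    unfolding P_def perm_tuples_def using permutes_inv[OF Qc] by auto
  moreover have "perm_matrix A P i j = int (c j i) + 1" if "i < N" "j < d" for i j
  proof -
    have "c j permutes {..<N}" and Qj: "Q j permutes {..<N}"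
      using c perm_tuples_permutes[OF Q] that by auto
    then have "Q j (c j i) < N"
      using that by (metis lessThan_iff permutes_in_image)
    moreover have "inv (P j) = Q j \<circ> c j"
      using that permutes_inv_inv[OF Qc] by (simp add: P_def)
    ultimately have "perm_matrix A P i j = int (inv (Q j) (Q j (c j i))) + 1"
      using A that by (simp add: perm_matrix_def)
    then show ?thesis
      by (simp add: permutes_inverses(2)[OF Qj])
  qed
  ultimately show ?thesis using that by blast
qed

lemma complete_consec_balanced_arrangement:
  assumes "complete_consec N d A" "d \<ge> 2"
  obtains P where "P \<in> perm_tuples N d"
    and "\<And>i. i < N \<Longrightarrow> \<bar>2 * row_sum d (perm_matrix A P) i - int d * (int N + 1)\<bar> \<le> 1"
proof -
  obtain c where c: "\<forall>j<d. c j permutes {..<N}"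
    and sums: "\<forall>r<N. \<bar>2 * (\<Sum>j<d. int (c j r)) - int d * (int N - 1)\<bar> \<le> 1"
    using permutations_near_constant_sum[OF assms(2)] by blast
  obtain P where P: "P \<in> perm_tuples N d"
    and entries: "\<And>i j. i < N \<Longrightarrow> j < d \<Longrightarrow> perm_matrix A P i j = int (c j i) + 1"
    using complete_consec_rearrange[OF assms(1) c] by blast
  have "row_sum d (perm_matrix A P) i = (\<Sum>j<d. int (c j i)) + int d" if "i < N" for i
    using that by (simp add: row_sum_def entries sum.distrib)
  with sums have "\<bar>2 * row_sum d (perm_matrix A P) i - int d * (int N + 1)\<bar> \<le> 1" if "i < N" for i
    using that by (auto simp: algebra_simps)
  with P show ?thesis using that by blast
qed

lemma
  assumes "complete_consec N d A" "N \<ge> 1"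
  shows beta_le_average: "2 * beta N d A \<le> int d * (int N + 1)"
    and average_le_gamma: "int d * (int N + 1) \<le> 2 * gamma N d A"
proof -
  let ?rows = "\<lambda>P. (\<lambda>i. row_sum d (perm_matrix A P) i) ` {..<N}"
  have rows: "finite (?rows P)" "?rows P \<noteq> {}" for P
    using assms(2) by (auto simp: lessThan_empty_iff)
  have total: "2 * (\<Sum>i<N. row_sum d (perm_matrix A P) i) = int N * (int d * (int N + 1))"
    if "P \<in> perm_tuples N d" for P
    using sum_row_sum_perm_matrix[OF that] sum_row_sum_complete_consec[OF assms(1)]
    by (simp add: algebra_simps)
  obtain P where P: "P \<in> perm_tuples N d" "beta N d A = Min (?rows P)"
    using Max_in[of "(\<lambda>P. Min (?rows P)) ` perm_tuples N d"] perm_tuples_finite perm_tuples_nonempty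
    unfolding beta_def by fastforce
  have "int N * Min (?rows P) \<le> (\<Sum>i<N. row_sum d (perm_matrix A P) i)"
    using sum_bounded_below[of "{..<N}" "Min (?rows P)"] rows by simp
  then have "int N * (2 * beta N d A) \<le> int N * (int d * (int N + 1))"
    using total[OF P(1)] by (simp add: P(2) mult.left_commute[of "int N" 2])
  then show "2 * beta N d A \<le> int d * (int N + 1)"
    using assms(2) by (simp add: mult_le_cancel_left_pos)
  obtain P where P: "P \<in> perm_tuples N d" "gamma N d A = Max (?rows P)"
    using Min_in[of "(\<lambda>P. Max (?rows P)) ` perm_tuples N d"] perm_tuples_finite perm_tuples_nonempty
    unfolding gamma_def by fastforce
  have "(\<Sum>i<N. row_sum d (perm_matrix A P) i) \<le> int N * Max (?rows P)"
    using sum_bounded_above[of "{..<N}" _ "Max (?rows P)"] rows by simp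
  then have "int N * (int d * (int N + 1)) \<le> int N * (2 * gamma N d A)"
    using total[OF P(1)] by (simp add: P(2) mult.left_commute[of "int N" 2])
  then show "int d * (int N + 1) \<le> 2 * gamma N d A"
    using assms(2) by (simp add: mult_le_cancel_left_pos)
qed

lemma
  assumes "complete_consec N d A" "d \<ge> 2" "N \<ge> 1"
  shows average_le_beta: "int d * (int N + 1) \<le> 2 * beta N d A + 1"
    and gamma_le_average: "2 * gamma N d A \<le> int d * (int N + 1) + 1"
proof -
  obtain P where P: "P \<in> perm_tuples N d"
    and bal: "\<And>i. i < N \<Longrightarrow> \<bar>2 * row_sum d (perm_matrix A P) i - int d * (int N + 1)\<bar> \<le> 1"
    using complete_consec_balanced_arrangement[OF assms(1,2)] by blast
  let ?rows = "(\<lambda>i. row_sum d (perm_matrix A P) i) ` {..<N}"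
  have "Min ?rows \<in> ?rows" "Max ?rows \<in> ?rows"
    using assms(3) by (auto simp: lessThan_empty_iff intro!: Min_in Max_in)
  then have "int d * (int N + 1) \<le> 2 * Min ?rows + 1" "2 * Max ?rows \<le> int d * (int N + 1) + 1"
    using bal by fastforce+
  moreover have "Min ?rows \<le> beta N d A" "gamma N d A \<le> Max ?rows"
    unfolding beta_def gamma_def using P perm_tuples_finite by (auto intro!: Max_ge Min_le)
  ultimately show "int d * (int N + 1) \<le> 2 * beta N d A + 1" "2 * gamma N d A \<le> int d * (int N + 1) + 1"
    by linarith+
qed

lemma a_d_Suc: "a_d d (Suc k) = a_d d k + (\<Sum>i<d. int i * int d ^ k)"
  by (simp add: a_d_def sum.distrib)

lemma a_d_closed_form: "2 * a_d d k = int d * (int d ^ k + 1)"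
proof (induction k)
  case 0
  then show ?case by (simp add: a_d_def)
next
  case (Suc k)
  have "2 * (\<Sum>i<d. int i) = int d * (int d - 1)"
    by (induction d) (auto simp: algebra_simps)
  then have "2 * (\<Sum>i<d. int i * int d ^ k) = int d * (int d - 1) * int d ^ k"
    by (simp add: sum_distrib_right[symmetric])
  with Suc show ?case
    by (simp add: a_d_Suc algebra_simps)
qed

lemma power_floor_log_le:
  assumes "b \<ge> 2" "n \<ge> 1"
  shows "b ^ nat \<lfloor>log (real b) (real n)\<rfloor> \<le> n"
proof -
  have "\<lfloor>log (real b) (real n)\<rfloor> \<ge> 0"
    using assms by simp
  then show ?thesis
    using floor_log_nat_eq_powr_iff[of b n "nat \<lfloor>log (real b) (real n)\<rfloor>"] assms by simp
qed

lemma le_power_ceiling_log: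
  assumes "b \<ge> 2" "n \<ge> 1"
  shows "n \<le> b ^ nat \<lceil>log (real b) (real n)\<rceil>"
proof (cases "n = 1")
  case False
  then have "\<lceil>log (real b) (real n)\<rceil> \<ge> 1"
    using assms by simp
  then obtain k where k: "\<lceil>log (real b) (real n)\<rceil> = int k + 1"
    by (metis add.commute nonneg_int_cases zle_iff_zadd)
  then have "n \<le> b ^ (k + 1)"
    using ceiling_log_nat_eq_powr_iff[of b n k] assms by simp
  then show ?thesis
    unfolding k by (simp add: nat_add_distrib)
qed simp

theorem corollary1:
  fixes N d :: nat and A :: "nat \<Rightarrow> nat \<Rightarrow> int"
  assumes "d \<ge> 2" and "N \<ge> 1" and "complete_consec N d A"
  defines "kf \<equiv> nat \<lfloor>log (real d) (real N)\<rfloor>"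
      and "kc \<equiv> nat \<lceil>log (real d) (real N)\<rceil>"
  shows "a_d d kf \<le> beta N d A \<and> beta N d A \<le> gamma N d A \<and> gamma N d A \<le> a_d d kc
     \<and> beta N d A - a_d d kf \<le> (\<Sum>i<d. int i * int d ^ (kc - 1))
     \<and> a_d d kc - gamma N d A \<le> (\<Sum>i<d. int i * int d ^ (kc - 1))"
proof -
  have "int d ^ kf \<le> int N" "int N \<le> int d ^ kc"
    using power_floor_log_le[OF assms(1,2)] le_power_ceiling_log[OF assms(1,2)]
    unfolding kf_def kc_def by (metis of_nat_le_iff of_nat_power)+
  then have "2 * a_d d kf \<le> int d * (int N + 1)" "int d * (int N + 1) \<le> 2 * a_d d kc"
    by (simp_all add: a_d_closed_form mult_left_mono)
  with beta_le_average[OF assms(3,2)] average_le_gamma[OF assms(3,2)]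
    average_le_beta[OF assms(3,1,2)] gamma_le_average[OF assms(3,1,2)]
  have "a_d d kf \<le> beta N d A" "beta N d A \<le> gamma N d A" "gamma N d A \<le> a_d d kc"
    by linarith+
  moreover have "a_d d kc - a_d d kf \<le> (\<Sum>i<d. int i * int d ^ (kc - 1))"
  proof -
    have "kc = kf \<or> kc = Suc kf"
      unfolding kf_def kc_def by linarith
    then show ?thesis
      by (auto simp: a_d_Suc intro!: sum_nonneg)
  qed
  ultimately show ?thesis by linarith
qed

end
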